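(* Let $S$ be a monoid, $I, J$ sets and $P$ a $J\times I$ matrix, and let $M$ be either $M(S; I, J; P)$ (entries of $P$ in $S$) or $M^0(S; I, J; P)$ (entries of $P$ in $S \cup \{0\}$), and suppose $M$ is finitely generated. If some entry of $P$ is a unit of $S$, then there exist finite choices of generators $\sigma$ for $S$ and $\tau$ for $M$ and a regular language $R$ such that $L_\sigma(S) = L_\tau(M) \cap R$.
   Context: The Rees matrix semigroup with zero $M^0(S; I, J; P)$ (where $0 \notin S$) has elements $(I \times S \times J) \cup \{0\}$, $0$ is a zero, and $(i_1, g_1, j_1)(i_2, g_2, j_2) = (i_1, g_1 P_{j_1 i_2} g_2, j_2)$ if $P_{j_1 i_2} \in S$ and $=0$ if $P_{j_1 i_2} = 0$. If $P$ has no zero entries, $M(S;I,J;P)$ is the subsemigroup $I \times S \times J$. A unit of a monoid $S$ with identity $1$ is $g$ with $gh = hg = 1$ for some $h \in S$. For a semigroup $S$, $S^1$ denotes the monoid obtained by adjoining a new identity $1$ (even if $S$ already has one). A choice of generators for $S$ is a surjective morphism $\sigma : X^+ \to S$ from a free semigroup, finite if $X$ is finite; it extends uniquely to $\sigma^1 : X^* \to S^1$. Let $\overline{X} = \{\overline{x} : x \in X\}$ be a set of formal inverses, $\hat{X} = X \cup \overline{X}$. The loop automaton of $S$ with respect to $\sigma$ is the directed labelled graph with vertex set $S^1$, having for each $a \in S^1$ and $x \in X$ an edge from $a$ to $a(x\sigma)$ labelled $x$ and an edge from $a(x\sigma)$ to $a$ labelled $\overline{x}$. The loop problem $L_\sigma(S)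 \subseteq \hat{X}^*$ is the set of words labelling paths from $1$ to $1$ in this graph (including the empty word). *)

theory Defs
  imports "HOL-Algebra.Group"
begin

inductive_set sgen :: "('e \<Rightarrow> 'e \<Rightarrow> 'e) \<Rightarrow> 'e set \<Rightarrow> 'e set"
  for mul :: "'e \<Rightarrow> 'e \<Rightarrow> 'e" and A :: "'e set" where
  base: "a \<in> A \<Longrightarrow> a \<in> sgen mul A"
| step: "a \<in> sgen mul A \<Longrightarrow> b \<in> sgen mul A \<Longrightarrow> mul a b \<in> sgen mul A"

definition fin_gen :: "'e set \<Rightarrow> ('e \<Rightarrow> 'e \<Rightarrow> 'e) \<Rightarrow> bool" where
  "fin_gen C mul \<longleftrightarrow> (\<exists>A. finite A \<and> A \<subseteq> C \<and> sgen mul A = C)"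

text \<open>A finite choice of generators: a surjective morphism from the free semigroup X^+
  onto the semigroup is determined by the images g x of the letters x in X;
  it is surjective iff the images generate the semigroup.\<close>
definition fin_choice :: "'e set \<Rightarrow> ('e \<Rightarrow> 'e \<Rightarrow> 'e) \<Rightarrow> nat set \<Rightarrow> (nat \<Rightarrow> 'e) \<Rightarrow> bool" where
  "fin_choice C mul X g \<longleftrightarrow> finite X \<and> g ` X \<subseteq> C \<and> sgen mul (g ` X) = C"

text \<open>Letters of hat X: Inl x is x, Inr x is the formal inverse bar x.
  Vertices of the loop automaton are elements of S^1, represented as 'e option,
  where None is the newly adjoined identity.\<close>

definition mult1 :: "('e \<Rightarrow> 'e \<Rightarrow> 'e) \<Rightarrow> 'e option \<Rightarrow> 'e \<Rightarrow> 'e option" where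
  "mult1 mul a s = (case a of None \<Rightarrow> Some s | Some b \<Rightarrow> Some (mul b s))"

definition vert :: "'e set \<Rightarrow> 'e option set" where
  "vert C = Some ` C \<union> {None}"

inductive lpath :: "'e set \<Rightarrow> ('e \<Rightarrow> 'e \<Rightarrow> 'e) \<Rightarrow> nat set \<Rightarrow> (nat \<Rightarrow> 'e)
    \<Rightarrow> 'e option \<Rightarrow> (nat + nat) list \<Rightarrow> 'e option \<Rightarrow> bool"
  for C mul X g where
  nil: "a \<in> vert C \<Longrightarrow> lpath C mul X g a [] a"
| fwd: "x \<in> X \<Longrightarrow> a \<in> vert C \<Longrightarrow> lpath C mul X g (mult1 mul a (g x)) w b
        \<Longrightarrow> lpath C mul X g a (Inl x # w) b"
| bwd: "x \<in> X \<Longrightarrow> a \<in> vert C \<Longrightarrow> lpath C mul X g a w b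
        \<Longrightarrow> lpath C mul X g (mult1 mul a (g x)) (Inr x # w) b"

definition loop_problem :: "'e set \<Rightarrow> ('e \<Rightarrow> 'e \<Rightarrow> 'e) \<Rightarrow> nat set \<Rightarrow> (nat \<Rightarrow> 'e)
    \<Rightarrow> (nat + nat) list set" where
  "loop_problem C mul X g = {w. lpath C mul X g None w None}"

definition hat :: "nat set \<Rightarrow> (nat + nat) set" where
  "hat X = Inl ` X \<union> Inr ` X"

definition regular_on :: "'s set \<Rightarrow> 's list set \<Rightarrow> bool" where
  "regular_on Sig R \<longleftrightarrow> finite Sig \<and>
     (\<exists>(Q::nat set) q0 F \<delta>. finite Q \<and> q0 \<in> Q \<and> F \<subseteq> Q \<and>
        (\<forall>q\<in>Q. \<forall>a\<in>Sig. \<delta> q a \<in> Q) \<and>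
        R = {w \<in> lists Sig. fold (\<lambda>a q. \<delta> q a) w q0 \<in> F})"

text \<open>Elements of M^0(S;I,J;P): Some (i,s,j), and None is the zero.
  Sandwich matrix P j i :: 'a option, None meaning the entry 0.
  With flag z = False we get M(S;I,J;P) (P must have no zero entries, no zero element).\<close>

definition rees_mult :: "('a, 'm) monoid_scheme \<Rightarrow> ('j \<Rightarrow> 'i \<Rightarrow> 'a option)
    \<Rightarrow> ('i \<times> 'a \<times> 'j) option \<Rightarrow> ('i \<times> 'a \<times> 'j) option \<Rightarrow> ('i \<times> 'a \<times> 'j) option" where
  "rees_mult S P a b = (case (a, b) of
      (Some (i1, g1, j1), Some (i2, g2, j2)) \<Rightarrow>
        (case P j1 i2 of None \<Rightarrow> None
         | Some p \<Rightarrow> Some (i1, g1 \<otimes>\<^bsub>S\<^esub> p \<otimes>\<^bsub>S\<^esub> g2, j2))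
    | _ \<Rightarrow> None)"

definition rees_carrier :: "bool \<Rightarrow> 'i set \<Rightarrow> ('a, 'm) monoid_scheme \<Rightarrow> 'j set
    \<Rightarrow> ('i \<times> 'a \<times> 'j) option set" where
  "rees_carrier z I S J = Some ` (I \<times> carrier S \<times> J) \<union> (if z then {None} else {})"

end

theory Submission
  imports Defs
begin

(*
  Let u = P j0 i0 be a unit.  Then s \<mapsto> (i0, s u\<^sup>-\<^sup>1, j0) embeds S into M, and S is
  finitely generated: writing (i0, s u\<^sup>-\<^sup>1, j0) as a product of generators of M expresses
  s u\<^sup>-\<^sup>1 through their S-components and sandwich entries.  Take generators \<sigma> of S and
  generators \<tau> of M containing the images of the \<sigma>-generators, and let R be all words over
  the letters of \<sigma>.  The embedding maps loops of S to loops of M.  Conversely, a path from 1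
  in the loop automaton of M with a label in R only visits 1 and elements (i0, t, j) with
  P j i0 \<noteq> 0, and (i0, t, j) \<mapsto> t P j i0 maps it back to a path in the loop automaton of S.
*)

lemma sgen_mono: "x \<in> sgen mul A \<Longrightarrow> A \<subseteq> B \<Longrightarrow> x \<in> sgen mul B"
  by (induction rule: sgen.induct) (auto intro: sgen.intros)

lemma sgen_subset_closed:
  "x \<in> sgen mul A \<Longrightarrow> A \<subseteq> C \<Longrightarrow> (\<And>a b. a \<in> C \<Longrightarrow> b \<in> C \<Longrightarrow> mul a b \<in> C) \<Longrightarrow> x \<in> C"
  by (induction rule: sgen.induct) auto

lemma sgen_eq_if_between:
  assumes "sgen mul A = C" "A \<subseteq> T" "T \<subseteq> C"
  shows "sgen mul T = C"
proof
  show "sgen mul T \<subseteq> C"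
    using sgen_subset_closed[of _ mul T C] assms(1,3) sgen.step[of _ mul A] by blast
  show "C \<subseteq> sgen mul T"
    using sgen_mono[of _ mul A T] assms(1,2) by blast
qed

lemma fin_choice_extend:
  assumes "fin_gen C mul" "finite X" "f ` X \<subseteq> C"
  shows "\<exists>Y \<tau>. X \<subseteq> Y \<and> (\<forall>x\<in>X. \<tau> x = f x) \<and> fin_choice C mul Y \<tau>"
proof -
  obtain A where "finite A" "A \<subseteq> C" and gen: "sgen mul A = C"
    using assms(1) unfolding fin_gen_def by blast
  then obtain n :: nat and g where A: "A = g ` {k. k < n}"
    using finite_conv_nat_seg_image[of A] by blast
  obtain N where N: "X \<subseteq> {..<N}"
    using assms(2) finite_nat_set_iff_bounded by (auto simp: subset_eq)
  define \<tau> where "\<tau> k = (if k \<in> X then f k else g (k - N))" for k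
  define Y where "Y = X \<union> (\<lambda>k. k + N) ` {k. k < n}"
  have shifted: "k + N \<notin> X" for k
    using N by auto
  have "\<tau> ` (\<lambda>k. k + N) ` {k. k < n} = A"
    unfolding A image_image by (rule image_cong) (simp_all add: \<tau>_def shifted)
  moreover have "\<tau> ` X = f ` X"
    by (rule image_cong) (simp_all add: \<tau>_def)
  ultimately have "\<tau> ` Y = f ` X \<union> A"
    by (simp add: Y_def image_Un)
  then have "fin_choice C mul Y \<tau>"
    using sgen_eq_if_between[OF gen] assms(2,3) \<open>A \<subseteq> C\<close>
    by (simp add: fin_choice_def Y_def)
  moreover have "X \<subseteq> Y" "\<forall>x\<in>X. \<tau> x = f x"
    by (simp_all add: Y_def \<tau>_def)
  ultimately show ?thesis
    by blast
qed

lemma fin_gen_imp_fin_choice: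
  assumes "fin_gen C mul"
  shows "\<exists>X g. fin_choice C mul X g"
  using fin_choice_extend[OF assms, of "{}"] by blast

lemma lpath_letters: "lpath C mul X g a w b \<Longrightarrow> w \<in> lists (hat X)"
  by (induction rule: lpath.induct) (auto simp: hat_def)

lemma map_option_mult1:
  assumes "a \<in> vert C" "s \<in> C" "\<forall>s\<in>C. \<forall>t\<in>C. \<phi> (mul s t) = mul' (\<phi> s) (\<phi> t)"
  shows "map_option \<phi> (mult1 mul a s) = mult1 mul' (map_option \<phi> a) (\<phi> s)"
  using assms by (auto simp: mult1_def vert_def)

lemma lpath_map_hom:
  assumes "lpath C mul X g a w b"
    and hom: "\<forall>s\<in>C. \<forall>t\<in>C. \<phi> (mul s t) = mul' (\<phi> s) (\<phi> t)"
    and "\<phi> ` C \<subseteq> D" "g ` X \<subseteq> C" "X \<subseteq> Y" "\<forall>x\<in>X. \<tau> x = \<phi> (g x)"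
  shows "lpath D mul' Y \<tau> (map_option \<phi> a) w (map_option \<phi> b)"
  using assms(1)
proof (induction rule: lpath.induct)
  case (nil a)
  then have "map_option \<phi> a \<in> vert D"
    using assms(3) by (auto simp: vert_def)
  then show ?case
    by (rule lpath.nil)
next
  case (fwd x a w b)
  have "x \<in> Y" "map_option \<phi> a \<in> vert D"
    "map_option \<phi> (mult1 mul a (g x)) = mult1 mul' (map_option \<phi> a) (\<tau> x)"
    using fwd.hyps(1,2) map_option_mult1[OF fwd.hyps(2) _ hom] assms(3-6) by (auto simp: vert_def)
  then show ?case
    using lpath.fwd fwd.IH by metis
next
  case (bwd x a w b)
  have "x \<in> Y" "map_option \<phi> a \<in> vert D"
    "map_option \<phi> (mult1 mul a (g x)) = mult1 mul' (map_option \<phi> a) (\<tau> x)"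
    using bwd.hyps(1,2) map_option_mult1[OF bwd.hyps(2) _ hom] assms(3-6) by (auto simp: vert_def)
  then show ?case
    using lpath.bwd bwd.IH by metis
qed

text \<open>A backward simulation: the invariant \<open>invar\<close> must be reflected by backward edges,
  since the loop automaton may be traversed against the direction of multiplication.\<close>

lemma lpath_simulation:
  assumes "lpath D mul' Y \<tau> a w b" "w \<in> lists (hat X)" "invar a"
    and invar_vert: "\<And>a. invar a \<Longrightarrow> val a \<in> vert C"
    and invar_step: "\<And>a x. invar a \<Longrightarrow> x \<in> X \<Longrightarrow> invar (mult1 mul' a (\<tau> x))"
    and val_step: "\<And>a x. invar a \<Longrightarrow> x \<in> X \<Longrightarrow>
                     val (mult1 mul' a (\<tau> x)) = mult1 mul (val a) (g x)"
    and invar_reflect: "\<And>a x. a \<in> vert D \<Longrightarrow> x \<in> X \<Longrightarrow> invar (mult1 mul' a (\<tau> x)) \<Longrightarrow> invar a"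
  shows "invar b \<and> lpath C mul X g (val a) w (val b)"
  using assms(1-3)
proof (induction rule: lpath.induct)
  case (nil a)
  then show ?case
    using invar_vert by (auto intro: lpath.nil)
next
  case (fwd x a w b)
  then have "x \<in> X" "w \<in> lists (hat X)"
    by (auto simp: hat_def)
  with fwd have "invar b \<and> lpath C mul X g (mult1 mul (val a) (g x)) w (val b)"
    using invar_step val_step by auto
  then show ?case
    using lpath.fwd[OF \<open>x \<in> X\<close> invar_vert[OF fwd.prems(2)]] by blast
next
  case (bwd x a w b)
  then have "x \<in> X" "w \<in> lists (hat X)"
    by (auto simp: hat_def)
  then have "invar a"
    using invar_reflect bwd.hyps(2) bwd.prems(2) by blast
  with bwd.IH \<open>w \<in> lists (hat X)\<close> have "invar b \<and> lpath C mul X g (val a) w (val b)"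
    by blast
  then show ?case
    using lpath.bwd[OF \<open>x \<in> X\<close> invar_vert[OF \<open>invar a\<close>]] val_step[OF \<open>invar a\<close> \<open>x \<in> X\<close>]
    by simp
qed

lemma regular_on_lists:
  assumes "finite X"
  shows "regular_on (hat X) (lists (hat X))"
proof -
  have "fold (\<lambda>a q. 0::nat) w 0 = 0" for w :: "(nat + nat) list"
    by (induction w) auto
  then show ?thesis
    using assms unfolding regular_on_def hat_def
    by (intro conjI exI[of _ "{0::nat}"] exI[of _ 0] exI[of _ "{0::nat}"] exI[of _ "\<lambda>q a. 0"]) auto
qed

lemma rees_sgen_components:
  fixes A :: "('i \<times> 'a \<times> 'j) option set" and P :: "'j \<Rightarrow> 'i \<Rightarrow> 'a option"
  defines "T \<equiv> Some -` A"
  defines "B \<equiv> fst ` snd ` T \<union> Some -` ((\<lambda>(j, i). P j i) ` (snd ` snd ` T \<times> fst ` T))"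
  assumes "y \<in> sgen (rees_mult S P) A" "y = Some (i, s, j)"
  shows "i \<in> fst ` T \<and> j \<in> snd ` snd ` T \<and> s \<in> sgen (mult S) B"
  using assms(3,4)
proof (induction arbitrary: i s j rule: sgen.induct)
  case (base a)
  then have "(i, s, j) \<in> T"
    by (simp add: T_def)
  then show ?case
    by (force simp: B_def intro: sgen.base)
next
  case (step a b)
  then obtain i1 g1 j1 i2 g2 j2 p where a: "a = Some (i1, g1, j1)" and b: "b = Some (i2, g2, j2)"
    and p: "P j1 i2 = Some p" and "i = i1" "s = g1 \<otimes>\<^bsub>S\<^esub> p \<otimes>\<^bsub>S\<^esub> g2" "j = j2"
    by (auto simp: rees_mult_def split: option.splits prod.splits)
  moreover note IH = step.IH(1)[OF a] step.IH(2)[OF b]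
  moreover from IH p have "p \<in> sgen (mult S) B"
    by (force simp: B_def intro: sgen.base)
  ultimately show ?case
    by (metis sgen.step)
qed

locale rees_unit_entry = monoid G for G (structure) +
  fixes I :: "'i set" and J :: "'j set" and P :: "'j \<Rightarrow> 'i \<Rightarrow> 'a option"
    and i0 :: 'i and j0 :: 'j and u :: 'a
  assumes sandwich_closed: "\<forall>j\<in>J. \<forall>i\<in>I. P j i \<in> Some ` carrier G \<union> {None}"
    and i0: "i0 \<in> I" and j0: "j0 \<in> J"
    and unit_entry: "P j0 i0 = Some u" and unit: "u \<in> Units G"
begin

lemma unit_carrier [simp]: "u \<in> carrier G" "inv u \<in> carrier G"
  using unit by auto

lemma inv_unit_mult_cancel [simp]: "inv u \<otimes> u = \<one>" "s \<in> carrier G \<Longrightarrow> inv u \<otimes> (u \<otimes> s) = s"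
  using unit by (simp_all add: m_assoc[symmetric])

lemma sandwich_carrier: "j \<in> J \<Longrightarrow> i \<in> I \<Longrightarrow> P j i = Some p \<Longrightarrow> p \<in> carrier G"
  using sandwich_closed by fastforce

definition embed :: "'a \<Rightarrow> ('i \<times> 'a \<times> 'j) option" where
  "embed s = Some (i0, s \<otimes> inv u, j0)"

lemma embed_carrier: "s \<in> carrier G \<Longrightarrow> embed s \<in> rees_carrier z I G J"
  using i0 j0 unit by (simp add: embed_def rees_carrier_def)

lemma embed_mult:
  assumes "s \<in> carrier G" "t \<in> carrier G"
  shows "embed (s \<otimes> t) = rees_mult G P (embed s) (embed t)"
proof -
  have "s \<otimes> inv u \<otimes> u \<otimes> (t \<otimes> inv u) = s \<otimes> t \<otimes> inv u"
    using assms by (simp add: m_assoc)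
  then show ?thesis
    using unit_entry by (simp add: embed_def rees_mult_def)
qed

lemma fin_gen_carrier:
  assumes "fin_gen (rees_carrier z I G J) (rees_mult G P)"
  shows "fin_gen (carrier G) (mult G)"
proof -
  obtain A where "finite A" and AM: "A \<subseteq> rees_carrier z I G J"
    and genA: "sgen (rees_mult G P) A = rees_carrier z I G J"
    using assms unfolding fin_gen_def by blast
  define T where "T = Some -` A"
  define B where "B = fst ` snd ` T \<union> Some -` ((\<lambda>(j, i). P j i) ` (snd ` snd ` T \<times> fst ` T))"
  have "finite T"
    using \<open>finite A\<close> by (simp add: T_def finite_vimageI)
  then have "finite (insert u B)"
    by (simp add: B_def finite_vimageI)
  have "T \<subseteq> I \<times> carrier G \<times> J"
    using AM by (auto simp: T_def rees_carrier_def split: if_splits)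
  then have "insert u B \<subseteq> carrier G"
    using unit sandwich_carrier by (fastforce simp: B_def)
  moreover have "carrier G \<subseteq> sgen (mult G) (insert u B)"
  proof
    fix s assume s: "s \<in> carrier G"
    then have "embed s \<in> sgen (rees_mult G P) A"
      using genA embed_carrier by simp
    then have "s \<otimes> inv u \<in> sgen (mult G) B"
      using rees_sgen_components[of "embed s"] unfolding embed_def T_def B_def by blast
    then have "s \<otimes> inv u \<otimes> u \<in> sgen (mult G) (insert u B)"
      by (blast intro: sgen.intros sgen_mono)
    then show "s \<in> sgen (mult G) (insert u B)"
      using s by (simp add: m_assoc)
  qed
  ultimately have "sgen (mult G) (insert u B) = carrier G"
    using sgen_subset_closed[of _ "mult G" "insert u B" "carrier G"] by blast
  then show ?thesis
    using \<open>finite (insert u B)\<close> \<open>insert u B \<subseteq> carrier G\<close> unfolding fin_gen_def by blast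
qed

text \<open>\<open>row_value\<close> extends the inverse of \<open>map_option embed\<close> to all vertices reachable from 1
  along letters of \<open>S\<close>.\<close>

definition row_vertex :: "('i \<times> 'a \<times> 'j) option option \<Rightarrow> bool" where
  "row_vertex a \<longleftrightarrow> a = None \<or>
     (\<exists>t j p. a = Some (Some (i0, t, j)) \<and> t \<in> carrier G \<and> j \<in> J \<and> P j i0 = Some p)"

definition row_value :: "('i \<times> 'a \<times> 'j) option option \<Rightarrow> 'a option" where
  "row_value a = (case a of Some (Some (i, t, j)) \<Rightarrow> Some (t \<otimes> the (P j i0)) | _ \<Rightarrow> None)"

lemma row_value_vert: "row_vertex a \<Longrightarrow> row_value a \<in> vert (carrier G)"
  using i0 sandwich_carrier by (auto simp: row_vertex_def row_value_def vert_def)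

lemma row_vertex_mult1:
  assumes "row_vertex a" "s \<in> carrier G"
  shows "row_vertex (mult1 (rees_mult G P) a (embed s))"
proof (cases "a = None")
  case True
  then show ?thesis
    using assms(2) j0 unit_entry by (simp add: row_vertex_def mult1_def embed_def)
next
  case False
  then obtain t j p where "a = Some (Some (i0, t, j))" "t \<in> carrier G" "j \<in> J" "P j i0 = Some p"
    using assms(1) by (auto simp: row_vertex_def)
  moreover have "p \<in> carrier G"
    using calculation sandwich_carrier i0 by blast
  ultimately show ?thesis
    using assms(2) j0 unit_entry by (simp add: row_vertex_def mult1_def embed_def rees_mult_def)
qed

lemma row_value_mult1:
  assumes "row_vertex a" "s \<in> carrier G"
  shows "row_value (mult1 (rees_mult G P) a (embed s)) = mult1 (mult G) (row_value a) s"
  using assms unit_entry sandwich_carrier[OF _ i0]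
  by (auto simp: row_vertex_def row_value_def mult1_def embed_def rees_mult_def m_assoc)

lemma row_vertex_mult1D:
  assumes "a \<in> vert (rees_carrier z I G J)" "row_vertex (mult1 (rees_mult G P) a (embed s))"
  shows "row_vertex a"
  using assms
  by (auto simp: vert_def rees_carrier_def row_vertex_def mult1_def embed_def rees_mult_def
      split: if_splits option.splits)

lemma loop_problem_eq:
  assumes "\<sigma> ` X \<subseteq> carrier G" "X \<subseteq> Y" "\<forall>x\<in>X. \<tau> x = embed (\<sigma> x)"
  shows "loop_problem (carrier G) (mult G) X \<sigma>
           = loop_problem (rees_carrier z I G J) (rees_mult G P) Y \<tau> \<inter> lists (hat X)"
proof (intro equalityI subsetI)
  fix w assume "w \<in> loop_problem (carrier G) (mult G) X \<sigma>"
  then have path: "lpath (carrier G) (mult G) X \<sigma> None w None"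
    by (simp add: loop_problem_def)
  have "lpath (rees_carrier z I G J) (rees_mult G P) Y \<tau> (map_option embed None) w (map_option embed None)"
    using lpath_map_hom[OF path _ _ assms] embed_mult embed_carrier by blast
  then show "w \<in> loop_problem (rees_carrier z I G J) (rees_mult G P) Y \<tau> \<inter> lists (hat X)"
    using lpath_letters[OF path] by (simp add: loop_problem_def)
next
  fix w assume "w \<in> loop_problem (rees_carrier z I G J) (rees_mult G P) Y \<tau> \<inter> lists (hat X)"
  then have path: "lpath (rees_carrier z I G J) (rees_mult G P) Y \<tau> None w None"
    and letters: "w \<in> lists (hat X)"
    by (simp_all add: loop_problem_def)
  have step: "row_vertex (mult1 (rees_mult G P) a (\<tau> x))"
    and value_step: "row_value (mult1 (rees_mult G P) a (\<tau> x)) = mult1 (mult G) (row_value a) (\<sigma> x)"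
    if "row_vertex a" "x \<in> X" for a x
    using row_vertex_mult1 row_value_mult1 that assms(1,3) by auto
  have reflect: "row_vertex a"
    if "a \<in> vert (rees_carrier z I G J)" "x \<in> X" "row_vertex (mult1 (rees_mult G P) a (\<tau> x))" for a x
    using row_vertex_mult1D that assms(3) by auto
  have "row_vertex None"
    by (simp add: row_vertex_def)
  with lpath_simulation[where invar = row_vertex and val = row_value, OF path letters]
  have "lpath (carrier G) (mult G) X \<sigma> (row_value None) w (row_value None)"
    using row_value_vert step value_step reflect by blast
  then show "w \<in> loop_problem (carrier G) (mult G) X \<sigma>"
    by (simp add: loop_problem_def row_value_def)
qed

end

theorem theorem5p3:
  fixes S :: "('a, 'm) monoid_scheme"
    and I :: "'i set" and J :: "'j set"
    and P :: "'j \<Rightarrow> 'i \<Rightarrow> 'a option"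
    and z :: bool
  assumes "monoid S"
    and "\<forall>j\<in>J. \<forall>i\<in>I. P j i \<in> Some ` carrier S \<union> {None}"
    and "\<not> z \<longrightarrow> (\<forall>j\<in>J. \<forall>i\<in>I. P j i \<noteq> None)"
    and "fin_gen (rees_carrier z I S J) (rees_mult S P)"
    and "\<exists>j\<in>J. \<exists>i\<in>I. \<exists>u. P j i = Some u \<and> u \<in> Units S"
  shows "\<exists>X \<sigma> Y \<tau> R.
           fin_choice (carrier S) (mult S) X \<sigma> \<and>
           fin_choice (rees_carrier z I S J) (rees_mult S P) Y \<tau> \<and>
           regular_on (hat X) R \<and>
           loop_problem (carrier S) (mult S) X \<sigma>
             = loop_problem (rees_carrier z I S J) (rees_mult S P) Y \<tau> \<inter> R"
proof -
  \<comment> \<open>The argument does not distinguish \<open>M\<close> from \<open>M\<^sup>0\<close>.\<close>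
  obtain j0 i0 u where "j0 \<in> J" "i0 \<in> I" "P j0 i0 = Some u" "u \<in> Units S"
    using assms(5) by blast
  with assms(1,2) interpret rees_unit_entry S I J P i0 j0 u
    by (simp add: rees_unit_entry_def rees_unit_entry_axioms_def)
  obtain X \<sigma> where \<sigma>: "fin_choice (carrier S) (mult S) X \<sigma>"
    using fin_gen_imp_fin_choice[OF fin_gen_carrier[OF assms(4)]] by blast
  then have "finite X" "\<sigma> ` X \<subseteq> carrier S"
    by (simp_all add: fin_choice_def)
  moreover have "(embed \<circ> \<sigma>) ` X \<subseteq> rees_carrier z I S J"
    using \<open>\<sigma> ` X \<subseteq> carrier S\<close> embed_carrier by auto
  ultimately obtain Y \<tau> where "X \<subseteq> Y" "\<forall>x\<in>X. \<tau> x = embed (\<sigma> x)"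
    and \<tau>: "fin_choice (rees_carrier z I S J) (rees_mult S P) Y \<tau>"
    using fin_choice_extend[OF assms(4)] by (metis comp_apply)
  then have "loop_problem (carrier S) (mult S) X \<sigma>
      = loop_problem (rees_carrier z I S J) (rees_mult S P) Y \<tau> \<inter> lists (hat X)"
    using loop_problem_eq[OF \<open>\<sigma> ` X \<subseteq> carrier S\<close>] by blast
  with \<sigma> \<tau> regular_on_lists[OF \<open>finite X\<close>] show ?thesis
    by blast
qed

end
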